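(* Let $p$ be an odd prime and take $k=0$. For every $s\ge2$, the $p^0$-Fibonacci number of the vertex $V_{s,0}=\lambda\big(2sp-(2s+1),\,sp-(s+1)\big)$ on floor $2s$ is $$\mathcal M_{V_{s,0}}=\frac{p-1}{2}\Big(2(s-1)p^{s-1}-(2s-3)p^{s-2}\Big).$$
   Context: Fix an odd prime $p$ and an integer $k\ge 0$. For integers $0\le i<n$ write $\lambda(n,i)=(n-i,1^i)$ for the hook partition of $n$ with $n-i$ boxes in its first row and $i$ further boxes in its first column. If $\mu=\lambda(n',i')$ is obtained from $\lambda(n,i)$ by appending $m=(n'-i')-(n-i)\ge 0$ boxes to the first row and $n''=i'-i\ge 0$ boxes to the first column, we say $\mu$ is obtained by adding the block $B_{m,n''}$ ($m$ horizontal nodes, $n''$ vertical nodes). Put $x_s=p^k(sp-(s+1))$. The relevant part ("column $k$") of the $p$-Bratteli diagram is the graded directed graph with vertices: on floor $2k+1$, $S_i=\lambda(p^k(p-1),i)$ for $0\le i<p^k(p-1)$; on floor $2(k+s)$ ($s\ge1$), $V_{s,l}=\lambda\big(p^k(2sp-(2s+1)),\,x_s+l\big)$ for $0\le l<p^k$; on floor $2(k+s)-1$ ($s\ge2$), $W_{s,l'}=\lambda\big(p^k((2s-1)p-2s),\,x_{s-1}+l'\big)$ for $0\le l'<p^{k+1}$; and edges, each labelled by the block added: (E1) $S_i\to V_{1,l}$ exactly when $i=p^kt+l$ with $0\le t\le p-2$, block $B_{p^kt,\,p^k(p-2-t)}$; (E2) for $s\ge2$, $0\le l<p^k$, $0\le\beta\le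 p-1$: $V_{s-1,l}\to W_{s,pl+\beta}$, block $B_{p^k(p-1)-((p-1)l+\beta),\,(p-1)l+\beta}$; (E3) for $s\ge 2$, $0\le l'<p^{k+1}$ and $t=\lfloor l'/p^k\rfloor$: $W_{s,l'}\to V_{s,l'-p^kt}$, block $B_{p^kt,\,p^k(p-1-t)}$. A path ending at a vertex $v$ is a sequence of edges starting at some $S_i$ and going up one floor at a time to $v$ ($S_i\to V_{1,\cdot}\to W_{2,\cdot}\to V_{2,\cdot}\to W_{3,\cdot}\to\cdots\to v$); $\mathcal P(v)$ is the set of all paths ending at $v$. The blocks of a path are numbered $B^2,B^3,\dots,B^N$: $B^2$ is the block of the edge leaving $S_i$, and for $j\ge2$, $B^{2j-1}$ is the block of the edge into $W_{j,\cdot}$ and $B^{2j}$ the block of the edge into $V_{j,\cdot}$. Write $B^j=B_{m_j,n_j}$. Descents: $1\in\mathrm{Des}(P)$ iff $m_2=p^kt$ with $0\le t<\frac{p-1}{2}$; $2\notin\mathrm{Des}(P)$; for $3\le j<N$, $j\in\mathrm{Des}(P)$ iff $m_j>m_{j+1}$ and $n_j<n_{j+1}$. $\mathrm{des}(P)=|\mathrm{Des}(P)|$. The $p^k$-Fibonacci number of a vertex $v$ is $\mathcal M_v=\sum_{P\in\mathcal P(v)}\mathrm{des}(P)$. *)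

theory Defs
  imports Main "HOL-Computational_Algebra.Primes"
begin

text \<open>A path ending at a vertex on floor 2(k+s)
 is encoded by the list of vertex indices [i, l_1, l'_2, l_2, ..., l'_s, l_s]:
 position 0 is S_i, position 2r-1 is V_{r,.}, position 2r-2 (r>=2) is W_{r,.}.
 Since edges are determined by their endpoints, this encodes the path.\<close>

definition valid_edge :: "nat \<Rightarrow> nat \<Rightarrow> nat \<Rightarrow> nat \<Rightarrow> nat \<Rightarrow> bool" where
  "valid_edge p k j a b =
    (if j = 0 then a < p^k * (p - 1) \<and> b < p^k \<and> (\<exists>t\<le>p - 2. a = p^k * t + b)
     else if odd j then a < p^k \<and> b < p^(k+1) \<and> (\<exists>\<beta>\<le>p - 1. b = p * a + \<beta>)
     else a < p^(k+1) \<and> b = a - p^k * (a div p^k))"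

text \<open>Block (m,n) of the edge leaving position j (this is block B^(j+2)).\<close>
definition edge_block :: "nat \<Rightarrow> nat \<Rightarrow> nat \<Rightarrow> nat \<Rightarrow> nat \<Rightarrow> nat \<times> nat" where
  "edge_block p k j a b =
    (if j = 0 then (p^k * (a div p^k), p^k * (p - 2 - a div p^k))
     else if odd j then (let c = (p - 1) * a + (b - p * a) in (p^k * (p - 1) - c, c))
     else (p^k * (a div p^k), p^k * (p - 1 - a div p^k)))"

definition paths_V :: "nat \<Rightarrow> nat \<Rightarrow> nat \<Rightarrow> nat \<Rightarrow> nat list set" where
  "paths_V p k s l = {xs. length xs = 2 * s \<and> last xs = l \<and>
      (\<forall>j < 2 * s - 1. valid_edge p k j (xs ! j) (xs ! (j + 1)))}"

definition blk :: "nat \<Rightarrow> nat \<Rightarrow> nat list \<Rightarrow> nat \<Rightarrow> nat \<times> nat" where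
  "blk p k xs J = edge_block p k (J - 2) (xs ! (J - 2)) (xs ! (J - 1))"

text \<open>Descent set; N = length xs (blocks B^2..B^N).\<close>
definition Des :: "nat \<Rightarrow> nat \<Rightarrow> nat list \<Rightarrow> nat set" where
  "Des p k xs =
    {J. J = 1 \<and> (\<exists>t. fst (blk p k xs 2) = p^k * t \<and> 2 * t < p - 1)} \<union>
    {J. 3 \<le> J \<and> J < length xs \<and> fst (blk p k xs J) > fst (blk p k xs (J + 1))
         \<and> snd (blk p k xs J) < snd (blk p k xs (J + 1))}"

definition des :: "nat \<Rightarrow> nat \<Rightarrow> nat list \<Rightarrow> nat" where
  "des p k xs = card (Des p k xs)"

definition fib_V :: "nat \<Rightarrow> nat \<Rightarrow> nat \<Rightarrow> nat \<Rightarrow> nat" where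
  "fib_V p k s l = (\<Sum>xs \<in> paths_V p k s l. des p k xs)"

end

theory Submission
  imports Defs
begin

(* For k = 0 every V-vertex is V_{s,0}, so a path ending at V_{s,0} is a list
   [i, 0, b_2, 0, ..., b_s, 0] with i < p - 1 and b_j < p chosen freely.  Appending b
   to a path ending at V_{s,0} creates a descent at 2s+1 iff 2b < p - 1, which happens
   for q = (p-1)/2 values of b, and (for s >= 2) a descent at 2s iff b_s + b >= p, which
   happens for b_s values of b.  Summing over b gives the recurrence
   M_{s+1} = p M_s + sum of b_s + q (p-1) p^(s-1), and the sum of b_s over all paths
   is (p-1) p^(s-2) p q; the closed form follows by induction. *)

lemma paths_V_0_one: "paths_V p 0 1 0 = (\<lambda>t. [t, 0]) ` {..<p - 1}"
proof (intro set_eqI iffI)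
  fix xs assume "xs \<in> paths_V p 0 1 0"
  then have "length xs = 2" "last xs = 0" "valid_edge p 0 0 (xs ! 0) (xs ! 1)"
    by (auto simp: paths_V_def)
  then show "xs \<in> (\<lambda>t. [t, 0]) ` {..<p - 1}"
    by (cases xs rule: list.exhaust; cases "tl xs"; auto simp: valid_edge_def)
qed (auto simp: paths_V_def valid_edge_def)

lemma paths_V_0_nth_last:
  assumes "xs \<in> paths_V p 0 s 0" "s \<ge> 1"
  shows "xs ! (2 * s - 1) = 0"
proof -
  have "length xs = 2 * s" "last xs = 0"
    using assms(1) by (auto simp: paths_V_def)
  then show ?thesis
    using assms(2) last_conv_nth[of xs] by force
qed

lemma paths_V_0_nth_W_less:
  assumes "xs \<in> paths_V p 0 s 0" "s \<ge> 2"
  shows "xs ! (2 * s - 2) < p"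
proof -
  have "valid_edge p 0 (2 * s - 3) (xs ! (2 * s - 3)) (xs ! (2 * s - 3 + 1))"
    using assms by (auto simp: paths_V_def)
  moreover have "2 * s - 3 + 1 = 2 * s - 2" "odd (2 * s - 3)" "2 * s - 3 \<noteq> 0"
    using assms(2) by presburger+
  ultimately show ?thesis
    by (simp add: valid_edge_def)
qed

lemma paths_V_0_Suc:
  assumes "s \<ge> 1"
  shows "paths_V p 0 (Suc s) 0 = (\<lambda>(ys, b). ys @ [b, 0]) ` (paths_V p 0 s 0 \<times> {..<p})"
proof (intro set_eqI iffI)
  fix xs assume xs: "xs \<in> paths_V p 0 (Suc s) 0"
  then have len: "length xs = 2 * s + 2"
    and edge: "\<And>j. j < 2 * s + 1 \<Longrightarrow> valid_edge p 0 j (xs ! j) (xs ! (j + 1))"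
    by (auto simp: paths_V_def)
  define ys where "ys = take (2 * s) xs"
  have "xs ! (2 * s + 1) = 0"
    using paths_V_0_nth_last[OF xs] by simp
  then have xs_eq: "xs = ys @ [xs ! (2 * s), 0]"
    using len by (intro nth_equalityI) (auto simp: ys_def nth_append less_Suc_eq)
  have "valid_edge p 0 (2 * s - 1) (xs ! (2 * s - 1)) (xs ! (2 * s))"
    using edge[of "2 * s - 1"] assms by (simp add: Suc_diff_le)
  then have "xs ! (2 * s - 1) = 0" "xs ! (2 * s) < p"
    using assms by (auto simp: valid_edge_def)
  moreover have "last ys = 0"
    using len assms \<open>xs ! (2 * s - 1) = 0\<close> last_conv_nth[of ys] by (force simp: ys_def)
  then have "ys \<in> paths_V p 0 s 0"
    using len edge by (auto simp: paths_V_def ys_def)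
  ultimately show "xs \<in> (\<lambda>(ys, b). ys @ [b, 0]) ` (paths_V p 0 s 0 \<times> {..<p})"
    using xs_eq by (auto intro!: image_eqI[where x = "(ys, xs ! (2 * s))"])
next
  fix xs assume "xs \<in> (\<lambda>(ys, b). ys @ [b, 0]) ` (paths_V p 0 s 0 \<times> {..<p})"
  then obtain ys b where xs: "xs = ys @ [b, 0]" and ys: "ys \<in> paths_V p 0 s 0" and "b < p"
    by auto
  have len: "length ys = 2 * s"
    and edge: "\<And>j. j < 2 * s - 1 \<Longrightarrow> valid_edge p 0 j (ys ! j) (ys ! (j + 1))"
    using ys by (auto simp: paths_V_def)
  have "valid_edge p 0 j (xs ! j) (xs ! (j + 1))" if j: "j < 2 * s + 1" for j
  proof -
    consider "j < 2 * s - 1" | "j = 2 * s - 1" | "j = 2 * s"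
      using j assms by linarith
    then show ?thesis
    proof cases
      case 1
      then have "xs ! j = ys ! j" "xs ! (j + 1) = ys ! (j + 1)"
        using len xs by (auto simp: nth_append)
      then show ?thesis using edge[OF 1] by simp
    next
      case 2
      then have "xs ! j = 0" "xs ! (j + 1) = b" "odd j"
        using len xs assms paths_V_0_nth_last[OF ys] by (auto simp: nth_append)
      then show ?thesis using \<open>b < p\<close> by (auto simp: valid_edge_def)
    qed (use len xs assms \<open>b < p\<close> in \<open>auto simp: nth_append valid_edge_def\<close>)
  qed
  then show "xs \<in> paths_V p 0 (Suc s) 0"
    using len xs by (simp add: paths_V_def)
qed

lemma inj_on_snoc_pair: "inj_on (\<lambda>(ys, b). ys @ [b, c]) A"
  by (auto simp: inj_on_def)

lemma card_paths_V_0: "s \<ge> 1 \<Longrightarrow> card (paths_V p 0 s 0) = (p - 1) * p ^ (s - 1)"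
proof (induction s rule: dec_induct)
  case base
  show ?case unfolding paths_V_0_one by (simp add: card_image inj_on_def)
next
  case (step s)
  have "card (paths_V p 0 (Suc s) 0) = card (paths_V p 0 s 0 \<times> {..<p})"
    unfolding paths_V_0_Suc[OF step.hyps(1)] by (rule card_image[OF inj_on_snoc_pair])
  also have "\<dots> = (p - 1) * p ^ s"
    using step by (simp add: card_cartesian_product power_eq_if)
  finally show ?case by simp
qed

lemma sum_paths_V_0_Suc:
  assumes "s \<ge> 1"
  shows "(\<Sum>xs\<in>paths_V p 0 (Suc s) 0. f xs) =
    (\<Sum>ys\<in>paths_V p 0 s 0. \<Sum>b<p. f (ys @ [b, 0]))"
proof -
  have "(\<Sum>xs\<in>paths_V p 0 (Suc s) 0. f xs) =
      (\<Sum>(ys, b)\<in>paths_V p 0 s 0 \<times> {..<p}. f (ys @ [b, 0]))"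
    unfolding paths_V_0_Suc[OF assms] 
    by (subst sum.reindex[OF inj_on_snoc_pair]) (simp add: case_prod_beta comp_def)
  then show ?thesis by (simp add: sum.cartesian_product)
qed

lemma blk_append:
  assumes "2 \<le> J" "J \<le> length ys"
  shows "blk p k (ys @ zs) J = blk p k ys J"
proof -
  have "J - 2 < length ys" "J - 1 < length ys"
    using assms by auto
  then show ?thesis by (simp add: blk_def nth_append)
qed

lemma Des_paths_V_0_snoc:
  assumes ys: "ys \<in> paths_V p 0 s 0" and "s \<ge> 1" "b < p"
  shows "Des p 0 (ys @ [b, 0]) = Des p 0 ys
     \<union> (if 2 \<le> s \<and> p \<le> ys ! (2 * s - 2) + b then {2 * s} else {})
     \<union> (if 2 * b < p - 1 then {2 * s + 1} else {})"
proof -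
  let ?xs = "ys @ [b, 0]"
  have len: "length ys = 2 * s"
    using ys by (simp add: paths_V_def)
  have blk_W: "blk p 0 ?xs (2 * s + 1) = (p - 1 - b, b)"
  proof -
    have "?xs ! (2 * s - 1) = 0" "?xs ! (2 * s) = b" "odd (2 * s - 1)"
      using len paths_V_0_nth_last[OF ys] \<open>s \<ge> 1\<close> by (auto simp: nth_append)
    moreover have "2 * s + 1 - 2 = 2 * s - 1"
      using \<open>s \<ge> 1\<close> by simp
    ultimately show ?thesis by (simp add: blk_def edge_block_def)
  qed
  have blk_V: "blk p 0 ?xs (2 * s + 2) = (b, p - 1 - b)"
    using len \<open>s \<ge> 1\<close> by (simp add: blk_def edge_block_def nth_append)
  have blk_last_V: "blk p 0 ?xs (2 * s) = (ys ! (2 * s - 2), p - 1 - ys ! (2 * s - 2))"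
    if "s \<ge> 2"
    using that len blk_append[of "2 * s" ys p 0 "[b, 0]"] by (simp add: blk_def edge_block_def)
  have blk_old: "blk p 0 ?xs J = blk p 0 ys J" if "2 \<le> J" "J \<le> 2 * s" for J
    using that len by (simp add: blk_append)
  show ?thesis
  proof (rule set_eqI)
    fix J
    consider "J < 3" | "3 \<le> J" "J < 2 * s" | "J = 2 * s" "3 \<le> J"
      | "J = 2 * s + 1" | "J > 2 * s + 1"
      using \<open>s \<ge> 1\<close> by linarith
    then show "J \<in> Des p 0 ?xs \<longleftrightarrow> J \<in> Des p 0 ys
     \<union> (if 2 \<le> s \<and> p \<le> ys ! (2 * s - 2) + b then {2 * s} else {})
     \<union> (if 2 * b < p - 1 then {2 * s + 1} else {})"
    proof cases
      case 1
      then show ?thesis using blk_old[of 2] \<open>s \<ge> 1\<close> by (auto simp: Des_def)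
    next
      case 2
      then show ?thesis using blk_old[of J] blk_old[of "J + 1"] len by (auto simp: Des_def)
    next
      case 3
      then have "s \<ge> 2" by linarith
      then show ?thesis using 3 blk_last_V blk_W len paths_V_0_nth_W_less[OF ys] \<open>b < p\<close>
        by (auto simp: Des_def)
    qed (use blk_W blk_V len \<open>b < p\<close> \<open>s \<ge> 1\<close>
      in \<open>auto simp: Des_def\<close>)
  qed
qed

lemma des_paths_V_0_snoc:
  assumes "ys \<in> paths_V p 0 s 0" "s \<ge> 1" "b < p"
  shows "des p 0 (ys @ [b, 0]) = des p 0 ys
     + of_bool (2 \<le> s \<and> p \<le> ys ! (2 * s - 2) + b) + of_bool (2 * b < p - 1)"
proof -
  have "Des p 0 ys \<subseteq> {..<2 * s}"
    using assms by (auto simp: Des_def paths_V_def)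
  then have "finite (Des p 0 ys)" "2 * s \<notin> Des p 0 ys" "2 * s + 1 \<notin> Des p 0 ys"
    by (auto intro: finite_subset)
  then show ?thesis
    unfolding des_def Des_paths_V_0_snoc[OF assms] by (simp add: card_insert_if)
qed

lemma card_lessThan_Int_double_less:
  fixes p q :: nat
  assumes "p = 2 * q + 1"
  shows "card ({..<p} \<inter> {b. 2 * b < p - 1}) = q"
proof -
  have "{..<p} \<inter> {b. 2 * b < p - 1} = {..<q}"
    using assms by auto
  then show ?thesis by simp
qed

lemma card_lessThan_Int_add_ge:
  fixes a p :: nat
  assumes "a < p"
  shows "card ({..<p} \<inter> {b. p \<le> a + b}) = a"
proof -
  have "{..<p} \<inter> {b. p \<le> a + b} = {p - a..<p}"
    using assms by auto
  then show ?thesis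
    using assms by simp
qed

lemma sum_lessThan_odd:
  fixes p q :: nat
  assumes "p = 2 * q + 1"
  shows "(\<Sum>b<p. b) = p * q"
proof -
  have "2 * (\<Sum>b=0..2 * q. b) = 2 * q * (2 * q + 1)"
    using double_gauss_sum[where 'a = nat, of "2 * q"] by simp
  moreover have "{..<p} = {0..2 * q}"
    using assms by auto
  ultimately show ?thesis
    using assms by simp
qed

lemma sum_paths_V_0_nth_W:
  fixes p q :: nat
  assumes "p = 2 * q + 1" "s \<ge> 2"
  shows "(\<Sum>xs\<in>paths_V p 0 s 0. xs ! (2 * s - 2)) = (p - 1) * p ^ (s - 2) * (p * q)"
proof -
  obtain r where s: "s = Suc r" "r \<ge> 1"
    using assms(2) by (cases s) auto
  have "(\<Sum>xs\<in>paths_V p 0 s 0. xs ! (2 * s - 2)) =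
      (\<Sum>ys\<in>paths_V p 0 r 0. \<Sum>b<p. (ys @ [b, 0]) ! (2 * r))"
    unfolding s(1) by (simp add: sum_paths_V_0_Suc[OF s(2)])
  also have "\<dots> = card (paths_V p 0 r 0) * (\<Sum>b<p. b)"
    by (simp add: paths_V_def nth_append)
  finally show ?thesis
    using s card_paths_V_0[OF s(2)] sum_lessThan_odd[OF assms(1)] by simp
qed

lemma fib_V_0_one:
  fixes p q :: nat
  assumes "p = 2 * q + 1"
  shows "fib_V p 0 1 0 = q"
proof -
  have "Des p 0 [t, 0] = (if 2 * t < p - 1 then {1} else {})" for t
    by (auto simp: Des_def blk_def edge_block_def)
  then have "des p 0 [t, 0] = of_bool (2 * t < p - 1)" for t
    by (simp add: des_def)
  then have "fib_V p 0 1 0 = (\<Sum>t<p - 1. of_bool (2 * t < p - 1))"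
    unfolding fib_V_def paths_V_0_one by (simp add: sum.reindex inj_on_def)
  also have "\<dots> = card {t. t < p - 1 \<and> 2 * t < p - 1}"
    by (simp add: Int_def)
  also have "{t. t < p - 1 \<and> 2 * t < p - 1} = {..<q}"
    using assms by auto
  finally show ?thesis by simp
qed

lemma fib_V_0_Suc:
  fixes p q :: nat
  assumes "p = 2 * q + 1" "s \<ge> 1"
  shows "fib_V p 0 (Suc s) 0 = p * fib_V p 0 s 0
     + (if s \<ge> 2 then \<Sum>xs\<in>paths_V p 0 s 0. xs ! (2 * s - 2) else 0)
     + q * card (paths_V p 0 s 0)"
proof -
  have step: "(\<Sum>b<p. des p 0 (ys @ [b, 0]))
      = p * des p 0 ys + (if s \<ge> 2 then ys ! (2 * s - 2) else 0) + q"
    if ys: "ys \<in> paths_V p 0 s 0" for ys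
  proof -
    have "(\<Sum>b<p. of_bool (2 \<le> s \<and> p \<le> ys ! (2 * s - 2) + b)) =
        (if s \<ge> 2 then ys ! (2 * s - 2) else 0)"
      using card_lessThan_Int_add_ge[OF paths_V_0_nth_W_less[OF ys]] by simp
    moreover have "(\<Sum>b<p. of_bool (2 * b < p - 1)) = q"
      using card_lessThan_Int_double_less[OF assms(1)] by simp
    ultimately show ?thesis
      using des_paths_V_0_snoc[OF ys assms(2)] by (simp add: sum.distrib)
  qed
  have "fib_V p 0 (Suc s) 0 = (\<Sum>ys\<in>paths_V p 0 s 0. \<Sum>b<p. des p 0 (ys @ [b, 0]))"
    unfolding fib_V_def by (rule sum_paths_V_0_Suc[OF assms(2)])
  also have "\<dots> =
      (\<Sum>ys\<in>paths_V p 0 s 0. p * des p 0 ys + (if s \<ge> 2 then ys ! (2 * s - 2) else 0) + q)"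
    using step by simp
  finally show ?thesis
    by (simp add: sum.distrib fib_V_def sum_distrib_left)
qed

lemma fib_V_0_closed_form:
  fixes p q :: nat
  assumes "p = 2 * q + 1"
  shows "fib_V p 0 (n + 2) 0 = q * p ^ n * (p + 2 * q * (2 * n + 1))"
proof (induction n)
  case 0
  show ?case
    using fib_V_0_Suc[OF assms, of 1] fib_V_0_one[OF assms] card_paths_V_0[of 1 p] assms
    by (simp add: numeral_2_eq_2 algebra_simps)
next
  case (Suc n)
  have "fib_V p 0 (Suc n + 2) 0 = p * fib_V p 0 (n + 2) 0
      + (p - 1) * p ^ n * (p * q) + q * ((p - 1) * p ^ (n + 1))"
    using fib_V_0_Suc[OF assms, of "n + 2"] sum_paths_V_0_nth_W[OF assms, of "n + 2"]
      card_paths_V_0[of "n + 2" p]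
    by simp
  then show ?case
    using Suc.IH assms by (simp add: algebra_simps)
qed

theorem mainTheorem5:
  fixes p s :: nat
  assumes "prime p" and "odd p" and "s \<ge> 2"
  shows "int (fib_V p 0 s 0) =
    ((int p - 1) div 2) * (2 * (int s - 1) * int p ^ (s - 1) - (2 * int s - 3) * int p ^ (s - 2))"
proof -
  obtain q where q: "p = 2 * q + 1"
    using assms(2) oddE by blast
  obtain n where n: "s = n + 2"
    using assms(3) le_Suc_ex by (metis add.commute)
  have shifts: "(int p - 1) div 2 = int q" "int s - 1 = int n + 1" "2 * int s - 3 = 2 * int n + 1"
    "s - 1 = n + 1" "s - 2 = n"
    using q n by simp_all
  have "int (fib_V p 0 s 0) = int (q * p ^ n * (p + 2 * q * (2 * n + 1)))"
    by (simp only: n fib_V_0_closed_form[OF q])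
  also have "\<dots> = int q * (2 * (int n + 1) * int p ^ (n + 1) - (2 * int n + 1) * int p ^ n)"
    using q by (simp add: algebra_simps)
  also have "\<dots> =
      ((int p - 1) div 2) * (2 * (int s - 1) * int p ^ (s - 1) - (2 * int s - 3) * int p ^ (s - 2))"
    by (simp only: shifts)
  finally show ?thesis .
qed

end
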